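(* If $n=2p$ for a prime $p$, then $\pi\ge\lceil r/2\rceil(n-2q-m+1)$.
   Context: $G$ is a set of size $n$ and $G(\circ)$, $G(\ast)$ are distinct groups on $G$ with the same identity element. $\mathrm{diff}(\circ,\ast)=\{(a,b):a\circ b\ne a\ast b\}$, $\mathrm{dist}(\circ,\ast)=|\mathrm{diff}(\circ,\ast)|$, $\mathrm{dist}_a=|\{b:a\circ b\ne a\ast b\}|$; $H=\{a:\mathrm{dist}_a=0\}$, $h=|H|$; $K=\{a:\mathrm{dist}_a<n/3\}$, $k=|K|$; $m=\min\{\mathrm{dist}_a:\mathrm{dist}_a>0\}$. Standing assumption: $m\ge 3$. Let $q=\lceil n/3\rceil$ and the profit $\pi=\mathrm{dist}(\circ,\ast)-((k-h)m+(n-k)q)$. Let $R=\{(a,a)\in\mathrm{diff}(\circ,\ast):a\in K\}$, $r=|R|$. *)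

theory Defs
  imports Complex_Main "HOL-Computational_Algebra.Primes" "HOL-Algebra.Group"
begin

text \<open>Two binary operations f (the paper's circ) and g (the paper's ast) on a carrier G.\<close>

definition diffset :: "'a set \<Rightarrow> ('a \<Rightarrow> 'a \<Rightarrow> 'a) \<Rightarrow> ('a \<Rightarrow> 'a \<Rightarrow> 'a) \<Rightarrow> ('a \<times> 'a) set" where
  "diffset G f g = {(a, b). a \<in> G \<and> b \<in> G \<and> f a b \<noteq> g a b}"

definition distop :: "'a set \<Rightarrow> ('a \<Rightarrow> 'a \<Rightarrow> 'a) \<Rightarrow> ('a \<Rightarrow> 'a \<Rightarrow> 'a) \<Rightarrow> nat" where
  "distop G f g = card (diffset G f g)"

definition dist_at :: "'a set \<Rightarrow> ('a \<Rightarrow> 'a \<Rightarrow> 'a) \<Rightarrow> ('a \<Rightarrow> 'a \<Rightarrow> 'a) \<Rightarrow> 'a \<Rightarrow> nat" where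
  "dist_at G f g a = card {b \<in> G. f a b \<noteq> g a b}"

definition Hset :: "'a set \<Rightarrow> ('a \<Rightarrow> 'a \<Rightarrow> 'a) \<Rightarrow> ('a \<Rightarrow> 'a \<Rightarrow> 'a) \<Rightarrow> 'a set" where
  "Hset G f g = {a \<in> G. dist_at G f g a = 0}"

definition Kset :: "'a set \<Rightarrow> ('a \<Rightarrow> 'a \<Rightarrow> 'a) \<Rightarrow> ('a \<Rightarrow> 'a \<Rightarrow> 'a) \<Rightarrow> 'a set" where
  "Kset G f g = {a \<in> G. real (dist_at G f g a) < real (card G) / 3}"

definition mmin :: "'a set \<Rightarrow> ('a \<Rightarrow> 'a \<Rightarrow> 'a) \<Rightarrow> ('a \<Rightarrow> 'a \<Rightarrow> 'a) \<Rightarrow> nat" where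
  "mmin G f g = Min {dist_at G f g a | a. a \<in> G \<and> dist_at G f g a > 0}"

definition qval :: "'a set \<Rightarrow> int" where
  "qval G = \<lceil>real (card G) / 3\<rceil>"

definition profit :: "'a set \<Rightarrow> ('a \<Rightarrow> 'a \<Rightarrow> 'a) \<Rightarrow> ('a \<Rightarrow> 'a \<Rightarrow> 'a) \<Rightarrow> int" where
  "profit G f g = int (distop G f g)
     - ((int (card (Kset G f g)) - int (card (Hset G f g))) * int (mmin G f g)
        + (int (card G) - int (card (Kset G f g))) * qval G)"

definition Rset :: "'a set \<Rightarrow> ('a \<Rightarrow> 'a \<Rightarrow> 'a) \<Rightarrow> ('a \<Rightarrow> 'a \<Rightarrow> 'a) \<Rightarrow> ('a \<times> 'a) set" where
  "Rset G f g = {(a, a) | a. (a, a) \<in> diffset G f g \<and> a \<in> Kset G f g}"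

end

theory Submission
  imports Defs "HOL-Algebra.Multiplicative_Group"
begin

text \<open>Write \<open>\<pi> = \<Sum>\<^sub>a excess a\<close>, where the excess of row \<open>a\<close> is \<open>dist_a\<close> minus the amount
  charged for it in \<open>\<pi>\<close>; every excess is nonnegative. If \<open>a \<in> K\<close> and \<open>a\<circ>a \<noteq> a\<ast>a\<close>, then
  \<open>n \<le> 2 dist_a + dist_{a\<circ>a}\<close>, so the square \<open>a\<circ>a\<close> lies outside \<open>K\<close> and the rows \<open>a\<close>, \<open>a\<circ>a\<close>
  together have excess at least \<open>n - 2q - m + 1\<close>. In a group of order \<open>2p\<close> a nonidentity
  element has at most two square roots, so the squares of the elements of \<open>R\<close> number at least
  \<open>\<lceil>r/2\<rceil>\<close>; pairing each of them with one of its roots gives disjoint pairs of rows.\<close>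

lemma dvd_two_times_prime_cases:
  assumes "prime (p::nat)" "d dvd 2 * p"
  shows "d = 1 \<or> d = 2 \<or> d = p \<or> d = 2 * p"
proof -
  obtain b c where "d = b * c" "b dvd 2" "c dvd p"
    using division_decomp[OF assms(2)] by blast
  moreover have "b = 1 \<or> b = 2"
    using \<open>b dvd 2\<close> dvd_imp_le[of b 2] by (cases b) (auto simp: less_Suc_eq_le le_Suc_eq)
  moreover have "c = 1 \<or> c = p" using \<open>c dvd p\<close> assms(1) by (simp add: prime_nat_iff)
  ultimately show ?thesis by auto
qed

context group
begin

lemma square_eq_pow_two: "x \<in> carrier G \<Longrightarrow> x \<otimes> x = x [^] (2::nat)"
  by (simp add: numeral_2_eq_2)

lemma square_roots_of_square_of_generator:
  assumes fin: "finite (carrier G)" and x: "x \<in> carrier G"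
    and ord_x: "ord x = 2 * p" and order_G: "order G = 2 * p" and "p > 1"
  shows "{y \<in> carrier G. y \<otimes> y = x \<otimes> x} \<subseteq> {x, x [^] (p + 1)}"
proof
  fix y assume "y \<in> {y \<in> carrier G. y \<otimes> y = x \<otimes> x}"
  hence y: "y \<in> carrier G" "y \<otimes> y = x \<otimes> x" by auto
  have "(\<lambda>k. x [^] k) ` {0..ord x - 1} = carrier G"
  proof (rule card_subset_eq[OF fin])
    show "card ((\<lambda>k. x [^] k) ` {0..ord x - 1}) = card (carrier G)"
      using card_image[OF ord_inj[OF x]] ord_x order_G \<open>p > 1\<close> by (simp add: order_def)
  qed (use x in auto)
  then obtain k where "k \<in> {0..ord x - 1}" "y = x [^] k" using y(1) by blast
  hence k: "k < 2 * p" "y = x [^] k" using ord_x \<open>p > 1\<close> by auto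
  have "x [^] (2 * k) = x [^] (2::nat)"
    using y k x by (simp add: square_eq_pow_two nat_pow_pow mult.commute)
  hence "x [^] int (2 * k) = x [^] int 2" by (simp only: int_pow_int)
  hence "int (2 * p) dvd 2 * (1 - int k)" using int_pow_eq x ord_x by fastforce
  then obtain t where "2 * (1 - int k) = int (2 * p) * t" by (auto elim: dvdE)
  hence t: "int k = 1 - int p * t" by simp
  have "int p * (-2) < int p * t" "int p * t < int p * 1" using t k \<open>p > 1\<close> by linarith+
  hence "t = 0 \<or> t = -1" using \<open>p > 1\<close> by (auto simp only: mult_less_cancel_left of_nat_0_less_iff)
  hence "k = 1 \<or> k = p + 1" using t by auto
  thus "y \<in> {x, x [^] (p + 1)}" using k x by auto
qed

lemma square_root_of_odd_order:
  assumes y: "y \<in> carrier G" and "odd (ord y)"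
  shows "y = (y \<otimes> y) [^] ((ord y + 1) div 2)"
proof -
  have "2 * ((ord y + 1) div 2) = ord y + 1" using \<open>odd (ord y)\<close> by presburger
  hence "(y \<otimes> y) [^] ((ord y + 1) div 2) = y [^] (ord y + 1)"
    using y by (metis square_eq_pow_two nat_pow_pow)
  also have "\<dots> = y [^] ord y \<otimes> y [^] (1::nat)" using y by (simp only: nat_pow_mult)
  also have "\<dots> = y" using y by simp
  finally show ?thesis by simp
qed

lemma card_square_roots_le_two:
  assumes fin: "finite (carrier G)" and order_G: "order G = 2 * p" and "prime p"
    and c: "c \<in> carrier G" "c \<noteq> \<one>"
  shows "card {x \<in> carrier G. x \<otimes> x = c} \<le> 2"
proof (cases "\<exists>x\<in>carrier G. x \<otimes> x = c \<and> ord x = 2 * p")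
  case True
  then obtain x where x: "x \<in> carrier G" "x \<otimes> x = c" "ord x = 2 * p" by blast
  have "{y \<in> carrier G. y \<otimes> y = c} \<subseteq> {x, x [^] (p + 1)}"
    using square_roots_of_square_of_generator[OF fin x(1,3) order_G] x(2)
      prime_gt_1_nat[OF \<open>prime p\<close>] by simp
  hence "card {y \<in> carrier G. y \<otimes> y = c} \<le> card {x, x [^] (p + 1)}" by (intro card_mono) auto
  also have "\<dots> \<le> 2" by (simp add: card_insert_if)
  finally show ?thesis .
next
  case False
  have "{y \<in> carrier G. y \<otimes> y = c} \<subseteq> {c [^] ((p + 1) div 2)}"
  proof
    fix y assume "y \<in> {y \<in> carrier G. y \<otimes> y = c}"
    hence y: "y \<in> carrier G" "y \<otimes> y = c" by auto
    have "ord y dvd 2 * p" using ord_dvd_group_order[OF y(1)] order_G by simp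
    hence "ord y = 1 \<or> ord y = 2 \<or> ord y = p \<or> ord y = 2 * p"
      using dvd_two_times_prime_cases \<open>prime p\<close> by blast
    moreover have "ord y \<noteq> 1" using ord_eq_1[OF y(1)] y c by auto
    moreover have "ord y \<noteq> 2" using pow_ord_eq_1[OF y(1)] y c square_eq_pow_two by metis
    moreover have "ord y \<noteq> 2 * p" using False y by blast
    ultimately have "ord y = p" "p \<noteq> 2" by auto
    hence "p > 2" using prime_ge_2_nat[OF \<open>prime p\<close>] by linarith
    hence "odd (ord y)" using \<open>prime p\<close> \<open>ord y = p\<close> prime_odd_nat by simp
    thus "y \<in> {c [^] ((p + 1) div 2)}"
      using square_root_of_odd_order[OF y(1)] y \<open>ord y = p\<close> by simp
  qed
  hence "card {y \<in> carrier G. y \<otimes> y = c} \<le> card {c [^] ((p + 1) div 2)}" by (intro card_mono) auto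
  thus ?thesis by simp
qed

end

definition excess :: "'a set \<Rightarrow> ('a \<Rightarrow> 'a \<Rightarrow> 'a) \<Rightarrow> ('a \<Rightarrow> 'a \<Rightarrow> 'a) \<Rightarrow> 'a \<Rightarrow> int" where
  "excess G f g a = int (dist_at G f g a)
     - (if a \<in> Hset G f g then 0 else if a \<in> Kset G f g then int (mmin G f g) else qval G)"

lemma dist_at_pos:
  "finite G \<Longrightarrow> a \<in> G \<Longrightarrow> b \<in> G \<Longrightarrow> f a b \<noteq> g a b \<Longrightarrow> 0 < dist_at G f g a"
  unfolding dist_at_def by (subst card_gt_0_iff) auto

lemma Hset_subset_Kset: "finite G \<Longrightarrow> Hset G f g \<subseteq> Kset G f g"
  by (auto simp: Hset_def Kset_def card_gt_0_iff)

lemma mmin_le_dist_at: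
  assumes "finite G" "a \<in> G" "0 < dist_at G f g a"
  shows "mmin G f g \<le> dist_at G f g a"
proof -
  have "finite {dist_at G f g a | a. a \<in> G \<and> 0 < dist_at G f g a}"
    using assms(1) by (rule finite_subset[rotated, OF finite_imageI]) auto
  thus ?thesis unfolding mmin_def using assms(2,3) by (intro Min_le) auto
qed

lemma qval_le_dist_at: "a \<in> G \<Longrightarrow> a \<notin> Kset G f g \<Longrightarrow> qval G \<le> int (dist_at G f g a)"
  by (simp add: Kset_def qval_def ceiling_le_iff)

lemma dist_at_less_qval: "a \<in> Kset G f g \<Longrightarrow> int (dist_at G f g a) < qval G"
proof -
  assume "a \<in> Kset G f g"
  hence "real (dist_at G f g a) < real (card G) / 3" by (simp add: Kset_def)
  also have "\<dots> \<le> of_int (qval G)" unfolding qval_def by (rule le_of_int_ceiling)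
  finally show ?thesis by linarith
qed

lemma excess_nonneg:
  assumes "finite G" "a \<in> G"
  shows "0 \<le> excess G f g a"
  using assms mmin_le_dist_at[OF assms] qval_le_dist_at[OF assms(2)]
  by (auto simp: excess_def Hset_def)

lemma distop_eq_sum_dist_at: "finite G \<Longrightarrow> distop G f g = (\<Sum>a\<in>G. dist_at G f g a)"
proof -
  assume "finite G"
  have "diffset G f g = Sigma G (\<lambda>a. {b \<in> G. f a b \<noteq> g a b})" by (auto simp: diffset_def)
  thus ?thesis using \<open>finite G\<close> by (simp add: distop_def dist_at_def)
qed

lemma profit_eq_sum_excess:
  assumes "finite G"
  shows "profit G f g = (\<Sum>a\<in>G. excess G f g a)"
proof -
  let ?H = "Hset G f g" and ?K = "Kset G f g" and ?m = "int (mmin G f g)"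
  define charge where "charge a = (if a \<in> ?H then 0 else if a \<in> ?K then ?m else qval G)" for a
  have HK: "?H \<subseteq> ?K" "?K \<subseteq> G" using Hset_subset_Kset[OF assms] by (auto simp: Kset_def)
  have "(\<Sum>a\<in>G. charge a) = (\<Sum>a\<in>G - ?H. if a \<in> ?K then ?m else qval G)"
    unfolding charge_def using assms by (subst sum.If_cases) (auto simp: Diff_eq)
  also have "\<dots> = int (card (?K - ?H)) * ?m + int (card (G - ?K)) * qval G"
  proof -
    have "(G - ?H) \<inter> {a. a \<in> ?K} = ?K - ?H" "(G - ?H) \<inter> - {a. a \<in> ?K} = G - ?K" using HK by auto
    thus ?thesis using assms by (subst sum.If_cases) auto
  qed
  also have "\<dots> = (int (card ?K) - int (card ?H)) * ?m + (int (card G) - int (card ?K)) * qval G"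
    using HK assms by (simp add: card_Diff_subset card_mono finite_subset)
  finally have "profit G f g = int (distop G f g) - (\<Sum>a\<in>G. charge a)"
    by (simp add: profit_def)
  also have "\<dots> = (\<Sum>a\<in>G. excess G f g a)"
    by (simp add: distop_eq_sum_dist_at[OF assms] excess_def charge_def sum_subtractf)
  finally show ?thesis .
qed

lemma ceiling_half_card_mult_le_sum:
  fixes w :: "'a \<Rightarrow> int" and s :: "'a \<Rightarrow> 'a"
  assumes fin: "finite A" and R: "R \<subseteq> A" "s ` R \<subseteq> A" "s ` R \<inter> R = {}"
    and fibres: "\<And>c. c \<in> s ` R \<Longrightarrow> card {a \<in> R. s a = c} \<le> 2"
    and nonneg: "\<And>a. a \<in> A \<Longrightarrow> 0 \<le> w a"
    and pairs: "\<And>a. a \<in> R \<Longrightarrow> X \<le> w (s a) + w a"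
  shows "\<lceil>real (card R) / 2\<rceil> * X \<le> (\<Sum>a\<in>A. w a)"
proof -
  define S where "S = s ` R"
  have finS: "finite S" and finR: "finite R" using fin R by (auto simp: S_def finite_subset)
  have "card R \<le> card (\<Union>c\<in>S. {a \<in> R. s a = c})" using finR by (intro card_mono) (auto simp: S_def)
  also have "\<dots> \<le> (\<Sum>c\<in>S. card {a \<in> R. s a = c})" by (rule card_UN_le[OF finS])
  also have "\<dots> \<le> (\<Sum>c\<in>S. 2)" using fibres by (intro sum_mono) (auto simp: S_def)
  finally have half: "\<lceil>real (card R) / 2\<rceil> \<le> int (card S)" by (simp add: ceiling_le_iff)
  define sel where "sel = inv_into R s"
  have sel: "sel c \<in> R" "s (sel c) = c" if "c \<in> S" for c
    using that unfolding sel_def S_def by (auto intro: inv_into_into f_inv_into_f)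
  have inj: "inj_on sel S" unfolding sel_def S_def by (rule inj_on_inv_into) simp
  have disj: "S \<inter> sel ` S = {}" using sel R(3) by (auto simp: S_def)
  have sub: "S \<union> sel ` S \<subseteq> A" using sel R by (auto simp: S_def)
  have "int (card S) * X = (\<Sum>c\<in>S. X)" by simp
  also have "\<dots> \<le> (\<Sum>c\<in>S. w c + w (sel c))" by (intro sum_mono) (metis pairs sel)
  also have "\<dots> = (\<Sum>c\<in>S \<union> sel ` S. w c)"
    using finS disj by (simp add: sum.distrib sum.reindex[OF inj] sum.union_disjoint)
  also have "\<dots> \<le> (\<Sum>a\<in>A. w a)" using fin sub nonneg by (intro sum_mono2) auto
  finally have bound: "int (card S) * X \<le> (\<Sum>a\<in>A. w a)" .
  show ?thesis
  proof (cases "0 \<le> X")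
    case True
    thus ?thesis using half bound by (meson mult_right_mono order_trans)
  next
    case False
    hence "\<lceil>real (card R) / 2\<rceil> * X \<le> 0" by (simp add: mult_nonneg_nonpos)
    thus ?thesis using nonneg by (meson order_trans sum_nonneg)
  qed
qed

locale two_groups_same_identity =
  fixes G :: "'a set" and f g :: "'a \<Rightarrow> 'a \<Rightarrow> 'a" and e :: 'a
  assumes finite_G: "finite G"
    and group_f: "group \<lparr>carrier = G, mult = f, one = e\<rparr>"
    and group_g: "group \<lparr>carrier = G, mult = g, one = e\<rparr>"
begin

lemma f_closed: "x \<in> G \<Longrightarrow> y \<in> G \<Longrightarrow> f x y \<in> G"
  using monoid.m_closed[OF group.is_monoid[OF group_f]] by fastforce

lemma f_assoc: "x \<in> G \<Longrightarrow> y \<in> G \<Longrightarrow> z \<in> G \<Longrightarrow> f (f x y) z = f x (f y z)"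
  using monoid.m_assoc[OF group.is_monoid[OF group_f]] by fastforce

lemma g_assoc: "x \<in> G \<Longrightarrow> y \<in> G \<Longrightarrow> z \<in> G \<Longrightarrow> g (g x y) z = g x (g y z)"
  using monoid.m_assoc[OF group.is_monoid[OF group_g]] by fastforce

lemma f_left_cancel: "x \<in> G \<Longrightarrow> y \<in> G \<Longrightarrow> z \<in> G \<Longrightarrow> f x y = f x z \<Longrightarrow> y = z"
  using monoid.Units_l_cancel[OF group.is_monoid[OF group_f]] group.Units_eq[OF group_f] by fastforce

lemma g_right_cancel: "x \<in> G \<Longrightarrow> y \<in> G \<Longrightarrow> z \<in> G \<Longrightarrow> g y x = g z x \<Longrightarrow> y = z"
  using group.right_cancel[OF group_g] by fastforce

lemma one_in_Kset: "e \<in> Kset G f g"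
proof -
  have e: "e \<in> G" using monoid.one_closed[OF group.is_monoid[OF group_f]] by simp
  have "{b \<in> G. f e b \<noteq> g e b} = {}"
    using monoid.l_one[OF group.is_monoid[OF group_f]] monoid.l_one[OF group.is_monoid[OF group_g]]
    by fastforce
  hence "dist_at G f g e = 0" unfolding dist_at_def by (simp only: card.empty)
  thus ?thesis using e finite_G by (auto simp: Kset_def card_gt_0_iff)
qed

lemma card_f_square_roots_le_two:
  assumes "card G = 2 * p" "prime p" "c \<in> G" "c \<noteq> e"
  shows "card {x \<in> G. f x x = c} \<le> 2"
  using group.card_square_roots_le_two[OF group_f, of p c] finite_G assms by (simp add: order_def)

text \<open>Let \<open>D\<close> be the columns where row \<open>a\<close> disagrees and \<open>E\<close> the \<open>f a\<close>-preimage of \<open>D\<close>. For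
  \<open>x \<notin> D \<union> E\<close>: \<open>f (f a a) x = f a (f a x) = g a (g a x) = g (g a a) x \<noteq> g (f a a) x\<close>,
  and \<open>|E| \<le> |D|\<close>.\<close>
lemma card_le_dist_at_plus_dist_at_square:
  assumes a: "a \<in> G" "f a a \<noteq> g a a"
  shows "card G \<le> 2 * dist_at G f g a + dist_at G f g (f a a)"
proof -
  define c where "c = f a a"
  define D where "D = {b \<in> G. f a b \<noteq> g a b}"
  define E where "E = {x \<in> G. f a x \<in> D}"
  define T where "T = G - (D \<union> E)"
  have c: "c \<in> G" "g a a \<in> G" using a f_closed group.is_monoid[OF group_g] monoid.m_closed
    by (fastforce simp: c_def)+
  have T_sub: "T \<subseteq> {x \<in> G. f c x \<noteq> g c x}"
  proof
    fix x assume "x \<in> T"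
    hence x: "x \<in> G" "f a x = g a x" "f a (f a x) = g a (f a x)"
      using a f_closed by (auto simp: T_def D_def E_def)
    have "f c x = g (g a a) x"
      using x a f_assoc g_assoc by (simp add: c_def)
    moreover have "g c x \<noteq> g (g a a) x" using g_right_cancel[OF x(1) c] a(2) by (auto simp: c_def)
    ultimately show "x \<in> {x \<in> G. f c x \<noteq> g c x}" using x by auto
  qed
  have "card E = card (f a ` E)" using f_left_cancel a by (intro card_image[symmetric] inj_onI) (auto simp: E_def)
  also have "\<dots> \<le> card D" using finite_G by (intro card_mono) (auto simp: D_def E_def)
  finally have E_le_D: "card E \<le> card D" .
  have "card G \<le> card (D \<union> E \<union> T)" using finite_G by (intro card_mono) (auto simp: D_def E_def T_def)
  also have "\<dots> \<le> card D + card E + card T" by (meson card_Un_le add_right_mono order_trans)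
  also have "card T \<le> dist_at G f g c" unfolding dist_at_def using T_sub finite_G by (intro card_mono) auto
  finally show ?thesis using E_le_D by (simp add: dist_at_def D_def c_def)
qed

lemma square_notin_Kset:
  assumes "a \<in> Kset G f g" "f a a \<noteq> g a a"
  shows "f a a \<notin> Kset G f g"
proof -
  have "a \<in> G" using assms(1) by (simp add: Kset_def)
  have "real (card G) \<le> 2 * real (dist_at G f g a) + real (dist_at G f g (f a a))"
    using card_le_dist_at_plus_dist_at_square[OF \<open>a \<in> G\<close> assms(2)] by linarith
  thus ?thesis using assms(1) by (auto simp: Kset_def)
qed

lemma excess_square_plus_excess_ge:
  assumes aK: "a \<in> Kset G f g" and a: "f a a \<noteq> g a a"
  shows "int (card G) - 2 * qval G - int (mmin G f g) + 1 \<le> excess G f g (f a a) + excess G f g a"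
proof -
  have aG: "a \<in> G" using aK by (simp add: Kset_def)
  have "a \<notin> Hset G f g" using dist_at_pos[of G a a f g] finite_G aG a by (simp add: Hset_def)
  hence "excess G f g a = int (dist_at G f g a) - int (mmin G f g)" using aK by (simp add: excess_def)
  moreover have "f a a \<notin> Hset G f g" "f a a \<notin> Kset G f g"
    using square_notin_Kset[OF aK a] Hset_subset_Kset[OF finite_G] by auto
  hence "excess G f g (f a a) = int (dist_at G f g (f a a)) - qval G" by (simp add: excess_def)
  moreover have "card G \<le> 2 * dist_at G f g a + dist_at G f g (f a a)"
    by (rule card_le_dist_at_plus_dist_at_square[OF aG a])
  moreover have "int (dist_at G f g a) < qval G" by (rule dist_at_less_qval[OF aK])
  ultimately show ?thesis by linarith
qed

end

theorem lemma9p3: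
  fixes G :: "'a set" and f g :: "'a \<Rightarrow> 'a \<Rightarrow> 'a" and e :: 'a and p :: nat
  assumes "finite G"
    and "group \<lparr>carrier = G, mult = f, one = e\<rparr>"
    and "group \<lparr>carrier = G, mult = g, one = e\<rparr>"
    and "\<exists>a\<in>G. \<exists>b\<in>G. f a b \<noteq> g a b"
    and "mmin G f g \<ge> 3"
    and "prime p" and "card G = 2 * p"
  shows "profit G f g \<ge> \<lceil>real (card (Rset G f g)) / 2\<rceil>
           * (int (card G) - 2 * qval G - int (mmin G f g) + 1)"
proof -
  interpret two_groups_same_identity G f g e using assms(1-3) by (simp add: two_groups_same_identity_def)
  define R where "R = {a \<in> Kset G f g. f a a \<noteq> g a a}"
  have "Rset G f g = (\<lambda>a. (a, a)) ` R" by (auto simp: Rset_def diffset_def R_def Kset_def)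
  hence card_R: "card (Rset G f g) = card R" by (simp add: card_image inj_on_def)
  have R_sub: "R \<subseteq> G" by (auto simp: R_def Kset_def)
  have squares: "(\<lambda>a. f a a) ` R \<subseteq> G - Kset G f g"
    using square_notin_Kset f_closed by (auto simp: R_def Kset_def)
  have fibres: "card {a \<in> R. f a a = c} \<le> 2" if "c \<in> (\<lambda>a. f a a) ` R" for c
  proof -
    have c: "c \<in> G" "c \<noteq> e" using that squares one_in_Kset by auto
    have "card {a \<in> R. f a a = c} \<le> card {x \<in> G. f x x = c}"
      using R_sub finite_G by (intro card_mono) auto
    also have "\<dots> \<le> 2" by (rule card_f_square_roots_le_two[OF assms(7,6) c])
    finally show ?thesis .
  qed
  have pairs: "int (card G) - 2 * qval G - int (mmin G f g) + 1 \<le> excess G f g (f a a) + excess G f g a"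
    if "a \<in> R" for a
    using excess_square_plus_excess_ge that by (simp add: R_def)
  have "\<lceil>real (card R) / 2\<rceil> * (int (card G) - 2 * qval G - int (mmin G f g) + 1)
      \<le> (\<Sum>a\<in>G. excess G f g a)"
    using squares by (intro ceiling_half_card_mult_le_sum[where s = "\<lambda>a. f a a" and w = "excess G f g",
        OF finite_G R_sub _ _ fibres _ pairs])
      (auto simp: R_def excess_nonneg[OF finite_G])
  thus ?thesis by (simp add: card_R profit_eq_sum_excess[OF finite_G])
qed

end
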